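(* Let $k\ge 0$, let $\mathfrak N\in\{\mathfrak N_1,\mathfrak N_2\}$, let $0=t^0<t^1<\dots<t^N$, and let $(\underline{\boldsymbol A}_h^0,\underline{\boldsymbol E}_h^0)\in(\underline X^{k,\mathfrak g}_{\mathrm{curl},h})^2$ be arbitrary initial data. Suppose that the families $(\underline{\boldsymbol A}_h^n,\underline{\boldsymbol E}_h^n,\underline\lambda_h^n)_n$, with $(\underline{\boldsymbol A}_h^n,\underline{\boldsymbol E}_h^n,\underline\lambda_h^n)\in(\underline X^{k,\mathfrak g}_{\mathrm{curl},h})^2\times\underline X^{k,\mathfrak g}_{\mathrm{grad},h}$, solve the scheme (S) described in the context (with this choice of $\mathfrak N$). Then, for every $\underline q_h\in\underline X^{k,\mathfrak g}_{\mathrm{grad},h}$, the quantity $$\mathfrak C^n(\underline q_h)\coloneq(\underline{\boldsymbol E}_h^n,\underline G_h^{k}\underline q_h)_{\mathrm{curl},\mathfrak g,h}+\int_U\big\langle \boldsymbol P_{\mathrm{curl},h}\underline{\boldsymbol E}_h^n,[\boldsymbol P_{\mathrm{curl},h}\underline{\boldsymbol A}_h^n,P_{\mathrm{grad},h}\underline q_h]\big\rangle$$ is independent of $n$.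
   Context: Geometry and mesh. $U\subset\mathbb R^3$ is a polyhedral domain with a mesh $\mathcal M_h=\mathcal T_h\cup\mathcal F_h\cup\mathcal E_h\cup\mathcal V_h$ of polyhedral elements (partitioning $U$), polygonal faces, edges and vertices, each topologically trivial. For a mesh entity $\mathsf P$, $\mathcal F_{\mathsf P},\mathcal E_{\mathsf P},\mathcal V_{\mathsf P}$ are its faces, edges, vertices. Each face $F$ has a fixed unit normal $\boldsymbol n_F$, each edge $E$ a fixed unit tangent $\boldsymbol t_E$. For $T\in\mathcal T_h$, $F\in\mathcal F_T$: $\omega_{TF}=+1$ if $\boldsymbol n_F$ points out of $T$, $-1$ otherwise. For $F\in\mathcal F_h$, $E\in\mathcal E_F$: $\omega_{FE}=+1$ if $\boldsymbol t_E$ points counter-clockwise along $\partial F$ w.r.t. the orientation induced by $\boldsymbol n_F$, $-1$ otherwise; $\boldsymbol n_{FE}$ is the unit vector with $(\boldsymbol t_E,\boldsymbol n_{FE},\boldsymbol n_F)$ right-handed. For $E\in\mathcal E_h$, $V\in\mathcal V_E$: $\omega_{EV}=+1$ if $\boldsymbol t_E$ points towards $V$, $-1$ otherwise. On a face, $\nabla_F,\mathrm{div}_F$ are tangential gradient/divergence and $\mathrm{\mathbf{rot}}_F r$ is the rotation of $\nabla_F r$ by $-\pi/2$ in the plane of $F$; on an edge, $r'$ is the derivative along $\boldsymbol t_E$. Polynomials. $\mathcal P^\ell(\mathsf P)$: polynomials of total degree $\le\ell$ on $\mathsf P$ ($\{0\}$ if $\ell<0$); $\mathcal P^{0,\ell}(\mathsf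 P)$ those with zero mean; $\boldsymbol{\mathcal P}^\ell(T)=\mathcal P^\ell(T)^3$; $\boldsymbol{\mathcal P}^\ell(F)$ the tangent-valued vector polynomials on $F$. With fixed points $\boldsymbol x_F\in F$, $\boldsymbol x_T\in T$: $\mathcal R^\ell(F)=\mathrm{\mathbf{rot}}_F\mathcal P^{\ell+1}(F)$, $\mathcal R^{c,\ell}(F)=(\boldsymbol x-\boldsymbol x_F)\mathcal P^{\ell-1}(F)$, $\mathcal R^\ell(T)=\mathrm{curl}\,\boldsymbol{\mathcal P}^{\ell+1}(T)$, $\mathcal R^{c,\ell}(T)=(\boldsymbol x-\boldsymbol x_T)\mathcal P^{\ell-1}(T)$, $\mathcal G^\ell(T)=\nabla\mathcal P^{\ell+1}(T)$, $\mathcal G^{c,\ell}(T)=(\boldsymbol x-\boldsymbol x_T)\times\boldsymbol{\mathcal P}^{\ell-1}(T)$. $\pi^\ell_{\mathsf P}$, $\pi^\ell_{\mathcal R,\mathsf P}$, $\pi^{c,\ell}_{\mathcal R,\mathsf P}$, $\pi^\ell_{\mathcal G,T}$, $\pi^{c,\ell}_{\mathcal G,T}$ are the $L^2$-orthogonal projectors onto $\mathcal P^\ell(\mathsf P)$, $\mathcal R^\ell(\mathsf P)$, $\mathcal R^{c,\ell}(\mathsf P)$, $\mathcal G^\ell(T)$, $\mathcal G^{c,\ell}(T)$. Serendipity DDR spaces. Fix $k\ge0$; for each $\mathsf P\in\mathcal T_h\cup\mathcal F_h$ an integer $\eta_{\mathsf P}\ge2$ (number of selected, non-aligned boundary faces/edges)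 and $\ell_{\mathsf P}=k+1-\eta_{\mathsf P}$. $\underline X^k_{\mathrm{grad},h}$: vectors $\underline q_h=((q_T)_T,(q_F)_F,(q_E)_E,(q_V)_V)$ with $q_T\in\mathcal P^{\ell_T}(T)$, $q_F\in\mathcal P^{\ell_F}(F)$, $q_E\in\mathcal P^{k-1}(E)$, $q_V\in\mathbb R$. $\underline X^k_{\mathrm{curl},h}$: $\underline{\boldsymbol v}_h=((\boldsymbol v_{\mathcal R,T},\boldsymbol v^c_{\mathcal R,T})_T,(\boldsymbol v_{\mathcal R,F},\boldsymbol v^c_{\mathcal R,F})_F,(v_E)_E)$ with $\boldsymbol v_{\mathcal R,T}\in\mathcal R^{k-1}(T)$, $\boldsymbol v^c_{\mathcal R,T}\in\mathcal R^{c,\ell_T+1}(T)$, $\boldsymbol v_{\mathcal R,F}\in\mathcal R^{k-1}(F)$, $\boldsymbol v^c_{\mathcal R,F}\in\mathcal R^{c,\ell_F+1}(F)$, $v_E\in\mathcal P^k(E)$. $\underline X^k_{\mathrm{div},h}$: $\underline{\boldsymbol w}_h=((\boldsymbol w_{\mathcal G,T},\boldsymbol w^c_{\mathcal G,T})_T,(w_F)_F)$ with $\boldsymbol w_{\mathcal G,T}\in\mathcal G^{k-1}(T)$, $\boldsymbol w^c_{\mathcal G,T}\in\mathcal G^{c,k}(T)$, $w_F\in\mathcal P^k(F)$. A subscript $\mathsf P$ (e.g. $\underline q_T,\underline{\boldsymbol v}_F$) denotes the restriction to the components on $\mathsf P$ and its boundary entities. For $\mathsf P\in\mathcal T_h\cup\mathcal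 F_h$, $\boldsymbol{\mathfrak S}_{G,\mathsf P}:\underline X^k_{\mathrm{grad},\mathsf P}\to\boldsymbol{\mathcal P}^k(\mathsf P)$ and $\boldsymbol{\mathfrak S}_{C,\mathsf P}:\underline X^k_{\mathrm{curl},\mathsf P}\to\boldsymbol{\mathcal P}^k(\mathsf P)$ are the (linear) serendipity gradient and curl reconstruction operators of Di Pietro–Droniou's serendipity DDR complex. Operators. Edge: $G^k_E\underline q_E\in\mathcal P^k(E)$ with $\int_E G^k_E\underline q_E\,r=-\int_E q_Er'+\sum_{V\in\mathcal V_E}\omega_{EV}q_Vr(\boldsymbol x_V)$ for all $r\in\mathcal P^k(E)$; $\gamma^{k+1}_E\underline q_E\in\mathcal P^{k+1}(E)$ with $\gamma^{k+1}_E\underline q_E(\boldsymbol x_V)=q_V$ and $\pi^{k-1}_E\gamma^{k+1}_E\underline q_E=q_E$. Face: $\boldsymbol G^k_F\underline q_F\in\boldsymbol{\mathcal P}^k(F)$ with $\int_F\boldsymbol G^k_F\underline q_F\cdot(\boldsymbol w+\boldsymbol\tau)=\sum_{E\in\mathcal E_F}\omega_{FE}\int_E\gamma^{k+1}_E\underline q_E(\boldsymbol w\cdot\boldsymbol n_{FE})+\int_F\boldsymbol{\mathfrak S}_{G,F}\underline q_F\cdot\boldsymbol\tau$ for all $(\boldsymbol w,\boldsymbol\tau)\in\mathcal R^k(F)\times\mathcal R^{c,k}(F)$; $\gamma^{k+1}_F\underline q_F\in\mathcal P^{k+1}(F)$ with $\int_F\gamma^{k+1}_F\underline q_F\,\mathrm{div}_F\boldsymbol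 w=-\int_F\boldsymbol G^k_F\underline q_F\cdot\boldsymbol w+\sum_{E\in\mathcal E_F}\omega_{FE}\int_E\gamma^{k+1}_E\underline q_E(\boldsymbol w\cdot\boldsymbol n_{FE})$ for all $\boldsymbol w\in\mathcal R^{c,k+2}(F)$. Element: $\boldsymbol G^k_T\underline q_T\in\boldsymbol{\mathcal P}^k(T)$ with $\int_T\boldsymbol G^k_T\underline q_T\cdot(\boldsymbol w+\boldsymbol\tau)=\sum_{F\in\mathcal F_T}\omega_{TF}\int_F\gamma^{k+1}_F\underline q_F(\boldsymbol w\cdot\boldsymbol n_F)+\int_T\boldsymbol{\mathfrak S}_{G,T}\underline q_T\cdot\boldsymbol\tau$ for all $(\boldsymbol w,\boldsymbol\tau)\in\mathcal R^k(T)\times\mathcal R^{c,k}(T)$; $P_{\mathrm{grad},T}\underline q_T\in\mathcal P^{k+1}(T)$ with $\int_TP_{\mathrm{grad},T}\underline q_T\,\mathrm{div}\boldsymbol w=-\int_T\boldsymbol G^k_T\underline q_T\cdot\boldsymbol w+\sum_{F\in\mathcal F_T}\omega_{TF}\int_F\gamma^{k+1}_F\underline q_F(\boldsymbol w\cdot\boldsymbol n_F)$ for all $\boldsymbol w\in\mathcal R^{c,k+2}(T)$. Face curl: $C^k_F\underline{\boldsymbol v}_F\in\mathcal P^k(F)$ with $\int_FC^k_F\underline{\boldsymbol v}_F\,r=\int_F\boldsymbol v_{\mathcal R,F}\cdot\mathrm{\mathbf{rot}}_Fr-\sum_{E\in\mathcal E_F}\omega_{FE}\int_Ev_Er$ for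 all $r\in\mathcal P^k(F)$; $\boldsymbol\gamma^k_{t,F}\underline{\boldsymbol v}_F\in\boldsymbol{\mathcal P}^k(F)$ with $\int_F\boldsymbol\gamma^k_{t,F}\underline{\boldsymbol v}_F\cdot(\mathrm{\mathbf{rot}}_Fr+\boldsymbol\tau)=\int_FC^k_F\underline{\boldsymbol v}_F\,r+\sum_{E\in\mathcal E_F}\omega_{FE}\int_Ev_Er+\int_F\boldsymbol{\mathfrak S}_{C,F}\underline{\boldsymbol v}_F\cdot\boldsymbol\tau$ for all $(r,\boldsymbol\tau)\in\mathcal P^{0,k+1}(F)\times\mathcal R^{c,k}(F)$. Element curl: $\boldsymbol C^k_T\underline{\boldsymbol v}_T\in\boldsymbol{\mathcal P}^k(T)$ with $\int_T\boldsymbol C^k_T\underline{\boldsymbol v}_T\cdot\boldsymbol w=\int_T\boldsymbol v_{\mathcal R,T}\cdot\mathrm{curl}\,\boldsymbol w+\sum_{F\in\mathcal F_T}\omega_{TF}\int_F\boldsymbol\gamma^k_{t,F}\underline{\boldsymbol v}_F\cdot(\boldsymbol w\times\boldsymbol n_F)$ for all $\boldsymbol w\in\boldsymbol{\mathcal P}^k(T)$; $\boldsymbol P_{\mathrm{curl},T}\underline{\boldsymbol v}_T\in\boldsymbol{\mathcal P}^k(T)$ with $\int_T\boldsymbol P_{\mathrm{curl},T}\underline{\boldsymbol v}_T\cdot(\mathrm{curl}\,\boldsymbol w+\boldsymbol\tau)=\int_T\boldsymbol C^k_T\underline{\boldsymbol v}_T\cdot\boldsymbol w-\sum_{F\in\mathcal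 F_T}\omega_{TF}\int_F\boldsymbol\gamma^k_{t,F}\underline{\boldsymbol v}_F\cdot(\boldsymbol w\times\boldsymbol n_F)+\int_T\boldsymbol{\mathfrak S}_{C,T}\underline{\boldsymbol v}_T\cdot\boldsymbol\tau$ for all $(\boldsymbol w,\boldsymbol\tau)\in\mathcal G^{c,k+1}(T)\times\mathcal R^{c,k}(T)$. Divergence: $D^k_T\underline{\boldsymbol w}_T\in\mathcal P^k(T)$ with $\int_TD^k_T\underline{\boldsymbol w}_T\,q=-\int_T\boldsymbol w_{\mathcal G,T}\cdot\nabla q+\sum_{F\in\mathcal F_T}\omega_{TF}\int_Fw_Fq$ for all $q\in\mathcal P^k(T)$; $\boldsymbol P_{\mathrm{div},T}\underline{\boldsymbol w}_T\in\boldsymbol{\mathcal P}^k(T)$ with $\int_T\boldsymbol P_{\mathrm{div},T}\underline{\boldsymbol w}_T\cdot(\nabla r+\boldsymbol\tau)=-\int_TD^k_T\underline{\boldsymbol w}_T\,r+\sum_{F\in\mathcal F_T}\omega_{TF}\int_Fw_Fr+\int_T\boldsymbol w^c_{\mathcal G,T}\cdot\boldsymbol\tau$ for all $(r,\boldsymbol\tau)\in\mathcal P^{0,k+1}(T)\times\mathcal G^{c,k}(T)$. Global operators: $\underline G^k_h\underline q_h=((\pi^{k-1}_{\mathcal R,T}\boldsymbol G^k_T\underline q_T,\pi^{c,\ell_T+1}_{\mathcal R,T}\boldsymbol G^k_T\underline q_T)_T,(\pi^{k-1}_{\mathcal R,F}\boldsymbol G^k_F\underline q_F,\pi^{c,\ell_F+1}_{\mathcal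 R,F}\boldsymbol G^k_F\underline q_F)_F,(G^k_E\underline q_E)_E)\in\underline X^k_{\mathrm{curl},h}$ and $\underline C^k_h\underline{\boldsymbol v}_h=((\pi^{k-1}_{\mathcal G,T}\boldsymbol C^k_T\underline{\boldsymbol v}_T,\pi^{c,k}_{\mathcal G,T}\boldsymbol C^k_T\underline{\boldsymbol v}_T)_T,(C^k_F\underline{\boldsymbol v}_F)_F)\in\underline X^k_{\mathrm{div},h}$. $P_{\mathrm{grad},h}$, $\boldsymbol P_{\mathrm{curl},h}$, $\boldsymbol P_{\mathrm{div},h}$, $\boldsymbol C^k_h$ are the piecewise polynomial functions on $U$ equal on each $T$ to $P_{\mathrm{grad},T}$, $\boldsymbol P_{\mathrm{curl},T}$, $\boldsymbol P_{\mathrm{div},T}$, $\boldsymbol C^k_T$ applied to the restriction to $T$. Discrete inner products. $(\underline{\boldsymbol w}_h,\underline{\boldsymbol v}_h)_{\mathrm{curl},h}=\sum_T[\int_T\boldsymbol P_{\mathrm{curl},T}\underline{\boldsymbol w}_T\cdot\boldsymbol P_{\mathrm{curl},T}\underline{\boldsymbol v}_T+s_{\mathrm{curl},T}(\underline{\boldsymbol w}_T,\underline{\boldsymbol v}_T)]$ with $s_{\mathrm{curl},T}(\underline{\boldsymbol w}_T,\underline{\boldsymbol v}_T)=\sum_{F\in\mathcal F_T}h_F\int_F((\boldsymbol P_{\mathrm{curl},T}\underline{\boldsymbol w}_T)_{t,F}-\boldsymbol\gamma^k_{t,F}\underline{\boldsymbol w}_F)\cdot((\boldsymbol P_{\mathrm{curl},T}\underline{\boldsymbol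 v}_T)_{t,F}-\boldsymbol\gamma^k_{t,F}\underline{\boldsymbol v}_F)+\sum_{E\in\mathcal E_T}h_E^2\int_E(\boldsymbol P_{\mathrm{curl},T}\underline{\boldsymbol w}_T\cdot\boldsymbol t_E-w_E)(\boldsymbol P_{\mathrm{curl},T}\underline{\boldsymbol v}_T\cdot\boldsymbol t_E-v_E)$, where $\boldsymbol z_{t,F}=\boldsymbol n_F\times(\boldsymbol z\times\boldsymbol n_F)$ and $h_F,h_E$ are diameters. $(\underline{\boldsymbol w}_h,\underline{\boldsymbol v}_h)_{\mathrm{div},h}=\sum_T[\int_T\boldsymbol P_{\mathrm{div},T}\underline{\boldsymbol w}_T\cdot\boldsymbol P_{\mathrm{div},T}\underline{\boldsymbol v}_T+s_{\mathrm{div},T}(\underline{\boldsymbol w}_T,\underline{\boldsymbol v}_T)]$ with $s_{\mathrm{div},T}(\underline{\boldsymbol w}_T,\underline{\boldsymbol v}_T)=\sum_{F\in\mathcal F_T}h_F\int_F(\boldsymbol P_{\mathrm{div},T}\underline{\boldsymbol w}_T\cdot\boldsymbol n_F-w_F)(\boldsymbol P_{\mathrm{div},T}\underline{\boldsymbol v}_T\cdot\boldsymbol n_F-v_F)$. Lie algebra tensorisation. $\mathfrak g$ is a finite-dimensional real Lie algebra with basis $(e_I)_{I=1}^d$, bracket $[\cdot,\cdot]$ and an ad-invariant inner product $\langle\cdot,\cdot\rangle$ (i.e. $\langle[x,y],z\rangle=-\langle y,[x,z]\rangle$); summation over repeated indices is implied. For a space $X$, $X\otimes\mathfrak g$ consists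 of $v=v^I\otimes e_I$, $v^I\in X$; the spaces $\underline X^{k,\mathfrak g}_{\bullet,h}=\underline X^k_{\bullet,h}\otimes\mathfrak g$ and all operators above act componentwise ($L(v)=L(v^I)\otimes e_I$), keeping the same symbols. $(\underline x_h,\underline y_h)_{\bullet,\mathfrak g,h}=(\underline x_h^I,\underline y_h^J)_{\bullet,h}\langle e_I,e_J\rangle$. For $\mathfrak g$-valued fields, pointwise $\langle\boldsymbol v,\boldsymbol w\rangle=(\boldsymbol v^I\cdot\boldsymbol w^J)\langle e_I,e_J\rangle$, $[\boldsymbol v,q]=\boldsymbol v^Iq^J\otimes[e_I,e_J]$ for scalar $q$, and $[\![\boldsymbol v,\boldsymbol w]\!]=(\boldsymbol v^I\times\boldsymbol w^J)\otimes[e_I,e_J]$. Discrete bracket $[\![\cdot,\cdot]\!]_h:(\underline X^{k,\mathfrak g}_{\mathrm{curl},h})^2\to\underline X^{k,\mathfrak g}_{\mathrm{div},h}$: face components $\pi^k_F([\![\boldsymbol\gamma^k_{t,F}\underline{\boldsymbol v}_F,\boldsymbol\gamma^k_{t,F}\underline{\boldsymbol w}_F]\!]\cdot\boldsymbol n_F)$, element components $\pi^{k-1}_{\mathcal G,T}[\![\boldsymbol P_{\mathrm{curl},T}\underline{\boldsymbol v}_T,\boldsymbol P_{\mathrm{curl},T}\underline{\boldsymbol w}_T]\!]$ and $\pi^{c,k}_{\mathcal G,T}[\![\boldsymbol P_{\mathrm{curl},T}\underline{\boldsymbol v}_T,\boldsymbol P_{\mathrm{curl},T}\underline{\boldsymbol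 w}_T]\!]$. Scheme (S). With $\delta t^{n+\frac12}=t^{n+1}-t^n$, $\delta_t^{n+1}v=(v^{n+1}-v^n)/\delta t^{n+\frac12}$ and $\underline{\boldsymbol A}_h^{n+\frac12}=\frac12(\underline{\boldsymbol A}_h^n+\underline{\boldsymbol A}_h^{n+1})$: for all $n$, (i) $\delta_t^{n+1}\underline{\boldsymbol A}_h=-\underline{\boldsymbol E}_h^{n+1}$; (ii) for all $\underline{\boldsymbol v}_h\in\underline X^{k,\mathfrak g}_{\mathrm{curl},h}$: $(\delta_t^{n+1}\underline{\boldsymbol E}_h,\underline{\boldsymbol v}_h)_{\mathrm{curl},\mathfrak g,h}+(\underline G^k_h\underline\lambda_h^{n+1},\underline{\boldsymbol v}_h)_{\mathrm{curl},\mathfrak g,h}+\int_U\langle[\boldsymbol P_{\mathrm{curl},h}\underline{\boldsymbol A}_h^{n+1},P_{\mathrm{grad},h}\underline\lambda_h^{n+1}],\boldsymbol P_{\mathrm{curl},h}\underline{\boldsymbol v}_h\rangle=(\underline C^k_h\underline{\boldsymbol A}_h^{n+1},\underline C^k_h\underline{\boldsymbol v}_h)_{\mathrm{div},\mathfrak g,h}+\mathfrak N(\underline{\boldsymbol A}_h^n,\underline{\boldsymbol A}_h^{n+1};\underline{\boldsymbol v}_h)$; (iii) for all $\underline q_h\in\underline X^{k,\mathfrak g}_{\mathrm{grad},h}$: $(\delta_t^{n+1}\underline{\boldsymbol E}_h,\underline G^k_h\underline q_h)_{\mathrm{curl},\mathfrak g,h}+\int_U\langle\boldsymbol P_{\mathrm{curl},h}(\delta_t^{n+1}\underline{\boldsymbol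 E}_h),[\boldsymbol P_{\mathrm{curl},h}\underline{\boldsymbol A}_h^n,P_{\mathrm{grad},h}\underline q_h]\rangle=0$. Here $\mathfrak N_1(\underline{\boldsymbol A}^n_h,\underline{\boldsymbol A}^{n+1}_h;\underline{\boldsymbol v}_h)=(\underline C^k_h\underline{\boldsymbol A}_h^{n+1},[\![\underline{\boldsymbol A}_h^{n+\frac12},\underline{\boldsymbol v}_h]\!]_h)_{\mathrm{div},\mathfrak g,h}+(\frac12[\![\underline{\boldsymbol A}_h^{n+1},\underline{\boldsymbol A}_h^{n+1}]\!]_h,\underline C^k_h\underline{\boldsymbol v}_h+[\![\underline{\boldsymbol A}_h^{n+\frac12},\underline{\boldsymbol v}_h]\!]_h)_{\mathrm{div},\mathfrak g,h}$ and $\mathfrak N_2(\underline{\boldsymbol A}^n_h,\underline{\boldsymbol A}^{n+1}_h;\underline{\boldsymbol v}_h)=\int_U\langle\boldsymbol C^k_h\underline{\boldsymbol A}_h^{n+1},[\![\boldsymbol P_{\mathrm{curl},h}\underline{\boldsymbol A}_h^{n+\frac12},\boldsymbol P_{\mathrm{curl},h}\underline{\boldsymbol v}_h]\!]\rangle+\int_U\langle\frac12[\![\boldsymbol P_{\mathrm{curl},h}\underline{\boldsymbol A}_h^{n+1},\boldsymbol P_{\mathrm{curl},h}\underline{\boldsymbol A}_h^{n+1}]\!],\boldsymbol C^k_h\underline{\boldsymbol v}_h+[\![\boldsymbol P_{\mathrm{curl},h}\underline{\boldsymbol A}_h^{n+\frac12},\boldsymbol P_{\mathrm{curl},h}\underline{\boldsymbol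 v}_h]\!]\rangle$. *)

theory Defs
  imports "HOL-Analysis.Analysis"
begin

type_synonym pt = "real^3"

text \<open>The Lie algebra g is a type of class euclidean_space (finite-dimensional real
inner product space); its inner product is the ad-invariant inner product and br is the bracket.\<close>

definition lie_algebra :: "('g::euclidean_space \<Rightarrow> 'g \<Rightarrow> 'g) \<Rightarrow> bool" where
  "lie_algebra br \<longleftrightarrow> bilinear br \<and> (\<forall>x. br x x = 0) \<and>
     (\<forall>x y z. br x (br y z) + br y (br z x) + br z (br x y) = 0)"

definition ad_invariant :: "('g::euclidean_space \<Rightarrow> 'g \<Rightarrow> 'g) \<Rightarrow> bool" where
  "ad_invariant br \<longleftrightarrow> (\<forall>x y z. inner (br x y) z = - inner y (br x z))"

text \<open>An element v = v^I \<otimes> e_I of X \<otimes> g is represented by the linear map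
y \<mapsto> \<Sum>_I \<langle>e_I,y\<rangle> v^I from g to X; for the orthonormal basis (Basis) of g one has v^I = v e_I.\<close>

definition tensor :: "('g::euclidean_space \<Rightarrow> 'x::real_vector) set" where
  "tensor = {v. linear v}"

definition tip :: "('x \<Rightarrow> 'x \<Rightarrow> real) \<Rightarrow> ('g::euclidean_space \<Rightarrow> 'x) \<Rightarrow> ('g \<Rightarrow> 'x) \<Rightarrow> real" where
  "tip ip v w = (\<Sum>b\<in>Basis. \<Sum>c\<in>Basis. ip (v b) (w c) * inner b c)"

definition fip :: "('g::euclidean_space \<Rightarrow> pt \<Rightarrow> real^3) \<Rightarrow> ('g \<Rightarrow> pt \<Rightarrow> real^3) \<Rightarrow> pt \<Rightarrow> real" where
  "fip V W x = (\<Sum>b\<in>Basis. \<Sum>c\<in>Basis. inner (V b x) (W c x) * inner b c)"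

text \<open>[V,Q] = V^I Q^J \<otimes> [e_I,e_J] for a g-valued vector field V and scalar field Q\<close>
definition lb_vs :: "('g::euclidean_space \<Rightarrow> 'g \<Rightarrow> 'g) \<Rightarrow> ('g \<Rightarrow> pt \<Rightarrow> real^3) \<Rightarrow> ('g \<Rightarrow> pt \<Rightarrow> real)
    \<Rightarrow> ('g \<Rightarrow> pt \<Rightarrow> real^3)" where
  "lb_vs br V Q = (\<lambda>y x. \<Sum>b\<in>Basis. \<Sum>c\<in>Basis. (inner (br b c) y * Q c x) *\<^sub>R V b x)"

text \<open>[[V,W]] = (V^I \<times> W^J) \<otimes> [e_I,e_J]\<close>
definition lb_vv :: "('g::euclidean_space \<Rightarrow> 'g \<Rightarrow> 'g) \<Rightarrow> ('g \<Rightarrow> pt \<Rightarrow> real^3) \<Rightarrow> ('g \<Rightarrow> pt \<Rightarrow> real^3)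
    \<Rightarrow> ('g \<Rightarrow> pt \<Rightarrow> real^3)" where
  "lb_vv br V W = (\<lambda>y x. \<Sum>b\<in>Basis. \<Sum>c\<in>Basis. inner (br b c) y *\<^sub>R cross3 (V b x) (W c x))"

text \<open>discrete bracket [[v,w]]_h = bh(v^I,w^J) \<otimes> [e_I,e_J], where bh is the scalar
discrete cross product X_curl \<times> X_curl \<rightarrow> X_div of the paper (faces: \<pi>_F((\<gamma> v \<times> \<gamma> w)\<cdot>n_F),
elements: projections of P_curl v \<times> P_curl w).\<close>
definition dbr :: "('g::euclidean_space \<Rightarrow> 'g \<Rightarrow> 'g) \<Rightarrow> ('xc \<Rightarrow> 'xc \<Rightarrow> 'xd::real_vector)
    \<Rightarrow> ('g \<Rightarrow> 'xc) \<Rightarrow> ('g \<Rightarrow> 'xc) \<Rightarrow> ('g \<Rightarrow> 'xd)" where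
  "dbr br bh v w = (\<lambda>y. \<Sum>b\<in>Basis. \<Sum>c\<in>Basis. inner (br b c) y *\<^sub>R bh (v b) (w c))"

definition intU :: "pt set \<Rightarrow> (pt \<Rightarrow> real) \<Rightarrow> real" where
  "intU U f = (LINT x:U|lborel. f x)"

definition halfavg :: "('g \<Rightarrow> 'x::real_vector) \<Rightarrow> ('g \<Rightarrow> 'x) \<Rightarrow> ('g \<Rightarrow> 'x)" where
  "halfavg a b = (\<lambda>y. (1/2) *\<^sub>R (a y + b y))"

text \<open>The (scalar) serendipity DDR spaces X_grad,h, X_curl,h, X_div,h are the types
'xg, 'xc, 'xd; Gh, Ch are the global discrete gradient and curl; Pg, Pc are the global
potentials P_grad,h, P_curl,h (piecewise polynomial fields on U); Cpw is the piecewise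
curl C^k_h; ipc, ipd are the discrete L2 inner products; bh the scalar discrete cross product.\<close>

definition ddr_data :: "pt set \<Rightarrow> ('xg::real_vector \<Rightarrow> 'xc::real_vector) \<Rightarrow> ('xc \<Rightarrow> 'xd::real_vector)
   \<Rightarrow> ('xg \<Rightarrow> pt \<Rightarrow> real) \<Rightarrow> ('xc \<Rightarrow> pt \<Rightarrow> real^3) \<Rightarrow> ('xc \<Rightarrow> pt \<Rightarrow> real^3)
   \<Rightarrow> ('xc \<Rightarrow> 'xc \<Rightarrow> real) \<Rightarrow> ('xd \<Rightarrow> 'xd \<Rightarrow> real) \<Rightarrow> ('xc \<Rightarrow> 'xc \<Rightarrow> 'xd) \<Rightarrow> bool" where
  "ddr_data U Gh Ch Pg Pc Cpw ipc ipd bh \<longleftrightarrow>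
     bounded U \<and> U \<in> sets lborel \<and>
     linear Gh \<and> linear Ch \<and>
     (\<forall>x. linear (\<lambda>q. Pg q x)) \<and> (\<forall>x. linear (\<lambda>v. Pc v x)) \<and> (\<forall>x. linear (\<lambda>v. Cpw v x)) \<and>
     (\<forall>q. Pg q \<in> borel_measurable lborel \<and> bounded (Pg q ` U)) \<and>
     (\<forall>v. Pc v \<in> borel_measurable lborel \<and> bounded (Pc v ` U)) \<and>
     (\<forall>v. Cpw v \<in> borel_measurable lborel \<and> bounded (Cpw v ` U)) \<and>
     bilinear ipc \<and> bilinear ipd \<and> bilinear bh \<and>
     (\<forall>v w. ipc v w = ipc w v) \<and> (\<forall>v. v \<noteq> 0 \<longrightarrow> ipc v v > 0) \<and>
     (\<forall>v w. ipd v w = ipd w v) \<and> (\<forall>v. v \<noteq> 0 \<longrightarrow> ipd v v > 0)"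

definition NL1 where
  "NL1 br Ch ipd bh A0 A1 v =
     tip ipd (Ch \<circ> A1) (dbr br bh (halfavg A0 A1) v)
   + tip ipd (\<lambda>y. (1/2) *\<^sub>R dbr br bh A1 A1 y)
             (\<lambda>y. Ch (v y) + dbr br bh (halfavg A0 A1) v y)"

definition NL2 where
  "NL2 br U Pc Cpw A0 A1 v =
     intU U (fip (Cpw \<circ> A1) (lb_vv br (Pc \<circ> halfavg A0 A1) (Pc \<circ> v)))
   + intU U (fip (\<lambda>y x. (1/2) *\<^sub>R lb_vv br (Pc \<circ> A1) (Pc \<circ> A1) y x)
                 (\<lambda>y x. Cpw (v y) x + lb_vv br (Pc \<circ> halfavg A0 A1) (Pc \<circ> v) y x))"

definition scheme_step where
  "scheme_step br U Gh Ch Pg Pc ipc ipd NL t A E lam n \<longleftrightarrow>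
    (let dt = t (Suc n) - t n;
         dE = (\<lambda>y. (1/dt) *\<^sub>R (E (Suc n) y - E n y)) in
      (\<lambda>y. (1/dt) *\<^sub>R (A (Suc n) y - A n y)) = (\<lambda>y. - E (Suc n) y)
    \<and> (\<forall>v\<in>tensor.
         tip ipc dE v + tip ipc (Gh \<circ> lam (Suc n)) v
         + intU U (fip (lb_vs br (Pc \<circ> A (Suc n)) (Pg \<circ> lam (Suc n))) (Pc \<circ> v))
         = tip ipd (Ch \<circ> A (Suc n)) (Ch \<circ> v) + NL (A n) (A (Suc n)) v)
    \<and> (\<forall>q\<in>tensor.
         tip ipc dE (Gh \<circ> q) + intU U (fip (Pc \<circ> dE) (lb_vs br (Pc \<circ> A n) (Pg \<circ> q))) = 0))"

definition constraintC where
  "constraintC br U Gh Pg Pc ipc A E n q =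
     tip ipc (E n) (Gh \<circ> q) + intU U (fip (Pc \<circ> E n) (lb_vs br (Pc \<circ> A n) (Pg \<circ> q)))"

end

(*
  Only equations (i) and (iii) of the scheme enter.
  By (i), A^(n+1) = A^n - dt E^(n+1), and E^(n+1) = E^n + dt dE with dE the discrete time
  derivative of E. Ad-invariance makes the structure constants <[e_I, e_J], e_K> antisymmetric
  in I and K, so <V, [V, Q]> = 0 pointwise. Hence in C^(n+1)(q) the bracket with P A^(n+1) can be
  replaced by the bracket with P A^n, and by linearity C^(n+1)(q) = C^n(q) + dt * (left-hand
  side of (iii)) = C^n(q).
*)
theory Submission
  imports Defs
begin

definition bounded_measurable_on ::
    "'a measure \<Rightarrow> 'a set \<Rightarrow> ('a \<Rightarrow> 'b::{real_normed_vector,second_countable_topology}) \<Rightarrow> bool" where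
  "bounded_measurable_on M U f \<longleftrightarrow> f \<in> borel_measurable M \<and> bounded (f ` U)"

lemma bounded_measurable_on_const: "bounded_measurable_on M U (\<lambda>x. c)"
  unfolding bounded_measurable_on_def bounded_iff by auto

lemma bounded_measurable_on_add:
  assumes "bounded_measurable_on M U f" "bounded_measurable_on M U g"
  shows "bounded_measurable_on M U (\<lambda>x. f x + g x)"
proof -
  obtain B C where "\<forall>x\<in>U. norm (f x) \<le> B" "\<forall>x\<in>U. norm (g x) \<le> C"
    using assms unfolding bounded_measurable_on_def bounded_iff by auto
  then have "\<forall>x\<in>U. norm (f x + g x) \<le> B + C"
    by (meson add_mono norm_triangle_le)
  then show ?thesis
    using assms unfolding bounded_measurable_on_def bounded_iff by auto
qed

lemma bounded_measurable_on_sum: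
  assumes "\<And>i. i \<in> I \<Longrightarrow> bounded_measurable_on M U (f i)"
  shows "bounded_measurable_on M U (\<lambda>x. \<Sum>i\<in>I. f i x)"
  using assms
  by (induction I rule: infinite_finite_induct)
     (auto intro: bounded_measurable_on_const bounded_measurable_on_add)

lemma bounded_measurable_on_bilinear:
  fixes prod :: "'b::{real_normed_vector,second_countable_topology} \<Rightarrow>
      'c::{real_normed_vector,second_countable_topology} \<Rightarrow> 'd::{real_normed_vector,second_countable_topology}"
  assumes prod: "bounded_bilinear prod"
    and f: "bounded_measurable_on M U f" and g: "bounded_measurable_on M U g"
  shows "bounded_measurable_on M U (\<lambda>x. prod (f x) (g x))"
proof -
  obtain K where K: "\<And>a b. norm (prod a b) \<le> norm a * norm b * K"
    using bounded_bilinear.bounded[OF prod] by blast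
  obtain B C where B: "\<forall>x\<in>U. norm (f x) \<le> B" and C: "\<forall>x\<in>U. norm (g x) \<le> C"
    using f g unfolding bounded_measurable_on_def bounded_iff by auto
  have "norm (prod (f x) (g x)) \<le> B * C * \<bar>K\<bar>" if "x \<in> U" for x
  proof -
    have "norm (prod (f x) (g x)) \<le> norm (f x) * norm (g x) * \<bar>K\<bar>"
      by (rule order_trans[OF K]) (simp add: mult_left_mono)
    also have "\<dots> \<le> B * C * \<bar>K\<bar>"
      using B C \<open>x \<in> U\<close> by (intro mult_right_mono mult_mono') auto
    finally show ?thesis .
  qed
  moreover have "(\<lambda>x. prod (f x) (g x)) \<in> borel_measurable M"
  proof (rule borel_measurable_continuous_Pair[where H = prod])
    show "continuous_on UNIV (\<lambda>z. prod (fst z) (snd z))"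
      using continuous_on_fst[OF continuous_on_id] continuous_on_snd[OF continuous_on_id]
      by (rule bounded_bilinear.continuous_on[OF prod])
  qed (use f g in \<open>auto simp: bounded_measurable_on_def\<close>)
  ultimately show ?thesis
    unfolding bounded_measurable_on_def bounded_iff by blast
qed

lemma bounded_measurable_on_set_integrable:
  fixes f :: "'a \<Rightarrow> 'b::{banach,second_countable_topology}"
  assumes "bounded_measurable_on M U f" "U \<in> sets M" "emeasure M U < \<infinity>"
  shows "set_integrable M U f"
proof -
  obtain B where "\<forall>x\<in>U. norm (f x) \<le> B"
    using assms(1) unfolding bounded_measurable_on_def bounded_iff by auto
  then show ?thesis
    unfolding set_integrable_def using assms
    by (intro integrableI_bounded_set_indicator[where B = B])
       (auto simp: bounded_measurable_on_def)
qed

lemma set_integrable_fip_lb_vs: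
  fixes br :: "'g::euclidean_space \<Rightarrow> 'g \<Rightarrow> 'g"
  assumes "U \<in> sets lborel" "bounded U"
    and "\<And>b. bounded_measurable_on lborel U (V b)" "\<And>b. bounded_measurable_on lborel U (W b)"
    and "\<And>c. bounded_measurable_on lborel U (Q c)"
  shows "set_integrable lborel U (fip V (lb_vs br W Q))"
proof -
  have "bounded_measurable_on lborel U (fip V (lb_vs br W Q))"
    unfolding fip_def lb_vs_def
    by (intro bounded_measurable_on_sum bounded_measurable_on_bilinear[OF bounded_bilinear_inner]
          bounded_measurable_on_bilinear[OF bounded_bilinear_mult]
          bounded_measurable_on_bilinear[OF bounded_bilinear_scaleR]
          bounded_measurable_on_const assms)
  then show ?thesis
    using assms(1,2) emeasure_bounded_finite by (blast intro: bounded_measurable_on_set_integrable)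
qed

lemma lie_bracket_antisym:
  assumes "lie_algebra br"
  shows "br x y = - br y x"
proof -
  have bl: "bilinear br" and alt: "\<And>x. br x x = 0"
    using assms unfolding lie_algebra_def by auto
  have "0 = br (x + y) (x + y)" using alt by simp
  also have "\<dots> = br x x + br x y + br y x + br y y"
    using bl by (simp add: bilinear_ladd bilinear_radd)
  finally show ?thesis using alt by (simp add: eq_neg_iff_add_eq_0 add.commute)
qed

lemma inner_bracket_swap:
  assumes "lie_algebra br" "ad_invariant br"
  shows "inner (br a c) b = - inner (br b c) a"
proof -
  have ad: "\<And>x y z. inner (br x y) z = - inner y (br x z)"
    using assms(2) unfolding ad_invariant_def by auto
  have "inner (br a c) b = - inner (br c a) b"
    using lie_bracket_antisym[OF assms(1), of a c] by simp
  also have "\<dots> = inner a (br c b)" using ad by simp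
  also have "\<dots> = inner (br c b) a" by (simp add: inner_commute)
  also have "\<dots> = - inner (br b c) a"
    using lie_bracket_antisym[OF assms(1), of c b] by simp
  finally show ?thesis .
qed

lemma fip_eq_sum_Basis:
  "fip V W x = (\<Sum>b\<in>(Basis::'g::euclidean_space set). inner (V b x) (W b x))"
proof -
  have "(\<Sum>c\<in>Basis. inner (V b x) (W c x) * inner b c) = inner (V b x) (W b x)"
    if "b \<in> Basis" for b :: 'g
    using that by (simp add: inner_Basis if_distrib cong: if_cong)
  then show ?thesis unfolding fip_def by simp
qed

lemma fip_lb_vs_self:
  fixes br :: "'g::euclidean_space \<Rightarrow> 'g \<Rightarrow> 'g"
  assumes "lie_algebra br" "ad_invariant br"
  shows "fip V (lb_vs br V Q) x = 0"
proof -
  define S where "S b b' = (\<Sum>c\<in>Basis. inner (br b' c) b * Q c x * inner (V b x) (V b' x))"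
    for b b' :: 'g
  have S_swap: "S b' b = - S b b'" for b b'
  proof -
    have "inner (br b c) b' * Q c x * inner (V b' x) (V b x)
        = - (inner (br b' c) b * Q c x * inner (V b x) (V b' x))" for c
      using inner_bracket_swap[OF assms, of b c b'] by (simp add: inner_commute)
    then show ?thesis unfolding S_def by (simp add: sum_negf)
  qed
  have fip_eq: "fip V (lb_vs br V Q) x = (\<Sum>b\<in>Basis. \<Sum>b'\<in>Basis. S b b')"
    unfolding fip_eq_sum_Basis lb_vs_def S_def
    by (simp add: inner_sum_right mult.assoc mult.left_commute)
  have "(\<Sum>b\<in>Basis. \<Sum>b'\<in>Basis. S b b') = (\<Sum>b'\<in>Basis. \<Sum>b\<in>Basis. S b b')"
    by (rule sum.swap)
  also have "\<dots> = (\<Sum>b'\<in>Basis. \<Sum>b\<in>Basis. - S b' b)"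
    by (intro sum.cong refl S_swap)
  also have "\<dots> = - (\<Sum>b\<in>Basis. \<Sum>b'\<in>Basis. S b b')"
    by (simp add: sum_negf)
  finally show ?thesis using fip_eq by simp
qed

lemma fip_add_scaleR_left:
  "fip (\<lambda>b x. V b x + c *\<^sub>R D b x) W x = fip V W x + c * fip D W x"
  unfolding fip_def
  by (simp add: inner_add_left distrib_right sum.distrib sum_distrib_left mult.assoc)

lemma fip_add_scaleR_right:
  "fip V (\<lambda>b x. W b x + c *\<^sub>R D b x) x = fip V W x + c * fip V D x"
  unfolding fip_def
  by (simp add: inner_add_right distrib_right sum.distrib sum_distrib_left mult.assoc)

lemma lb_vs_add_scaleR:
  "lb_vs br (\<lambda>b x. V b x + c *\<^sub>R D b x) Q = (\<lambda>y x. lb_vs br V Q y x + c *\<^sub>R lb_vs br D Q y x)"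
  unfolding lb_vs_def
  by (simp add: scaleR_add_right sum.distrib scaleR_sum_right mult_ac)

lemma fip_lb_vs_shift:
  fixes br :: "'g::euclidean_space \<Rightarrow> 'g \<Rightarrow> 'g"
  assumes "lie_algebra br" "ad_invariant br"
  shows "fip V (lb_vs br (\<lambda>b x. W b x + c *\<^sub>R V b x) Q) x = fip V (lb_vs br W Q) x"
proof -
  have "fip V (lb_vs br (\<lambda>b x. W b x + c *\<^sub>R V b x) Q) x
      = fip V (lb_vs br W Q) x + c * fip V (lb_vs br V Q) x"
    unfolding lb_vs_add_scaleR by (rule fip_add_scaleR_right)
  also have "\<dots> = fip V (lb_vs br W Q) x"
    by (simp only: fip_lb_vs_self[OF assms] mult_zero_right add_0_right)
  finally show ?thesis .
qed

lemma tip_add_scaleR_left: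
  assumes "bilinear ip"
  shows "tip ip (\<lambda>b. v b + c *\<^sub>R d b) w = tip ip v w + c * tip ip d w"
  unfolding tip_def using assms
  by (simp add: bilinear_ladd bilinear_lmul distrib_right sum.distrib sum_distrib_left mult.assoc)

lemma comp_add_scaleR:
  assumes "\<And>x. linear (\<lambda>v. P v x)"
  shows "P \<circ> (\<lambda>b. u b + c *\<^sub>R w b) = (\<lambda>b x. (P \<circ> u) b x + c *\<^sub>R (P \<circ> w) b x)"
  using linear_add[OF assms] linear_scale[OF assms] by (simp add: fun_eq_iff)

lemma constraintC_Suc:
  fixes br :: "'g::euclidean_space \<Rightarrow> 'g \<Rightarrow> 'g"
  assumes lie: "lie_algebra br" "ad_invariant br"
    and ddr: "ddr_data U Gh Ch Pg Pc Cpw ipc ipd bh"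
    and dt_pos: "t n < t (Suc n)"
    and step: "scheme_step br U Gh Ch Pg Pc ipc ipd NL t A E lam n"
    and q: "q \<in> tensor"
  shows "constraintC br U Gh Pg Pc ipc A E (Suc n) q = constraintC br U Gh Pg Pc ipc A E n q"
proof -
  have U: "U \<in> sets lborel" "bounded U" and ipc: "bilinear ipc"
    and Pc_linear: "\<And>x. linear (\<lambda>v. Pc v x)"
    and Pc_bm: "\<And>v. bounded_measurable_on lborel U (Pc v)"
    and Pg_bm: "\<And>q. bounded_measurable_on lborel U (Pg q)"
    using ddr unfolding ddr_data_def bounded_measurable_on_def by auto
  define dt where "dt = t (Suc n) - t n"
  define dE where "dE = (\<lambda>y. (1/dt) *\<^sub>R (E (Suc n) y - E n y))"
  have "dt \<noteq> 0" using dt_pos unfolding dt_def by simp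
  have A_step: "(\<lambda>y. (1/dt) *\<^sub>R (A (Suc n) y - A n y)) = (\<lambda>y. - E (Suc n) y)"
    and gauss: "tip ipc dE (Gh \<circ> q) + intU U (fip (Pc \<circ> dE) (lb_vs br (Pc \<circ> A n) (Pg \<circ> q))) = 0"
    using step q unfolding scheme_step_def Let_def dt_def[symmetric] dE_def[symmetric] by blast+
  have A_Suc: "A (Suc n) = (\<lambda>b. A n b + (- dt) *\<^sub>R E (Suc n) b)"
  proof
    fix b
    have "dt *\<^sub>R ((1/dt) *\<^sub>R (A (Suc n) b - A n b)) = - dt *\<^sub>R E (Suc n) b"
      using fun_cong[OF A_step, of b] by simp
    then show "A (Suc n) b = A n b + (- dt) *\<^sub>R E (Suc n) b"
      using \<open>dt \<noteq> 0\<close> by (simp add: algebra_simps)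
  qed
  have E_Suc: "E (Suc n) = (\<lambda>b. E n b + dt *\<^sub>R dE b)"
    unfolding dE_def using \<open>dt \<noteq> 0\<close> by (simp add: algebra_simps)
  let ?F = "\<lambda>V. fip (Pc \<circ> V) (lb_vs br (Pc \<circ> A n) (Pg \<circ> q))"
  have pointwise: "fip (Pc \<circ> E (Suc n)) (lb_vs br (Pc \<circ> A (Suc n)) (Pg \<circ> q)) x
      = ?F (E n) x + dt * ?F dE x" for x
  proof -
    have "fip (Pc \<circ> E (Suc n)) (lb_vs br (Pc \<circ> A (Suc n)) (Pg \<circ> q)) x = ?F (E (Suc n)) x"
      unfolding A_Suc comp_add_scaleR[OF Pc_linear] by (rule fip_lb_vs_shift[OF lie])
    also have "\<dots> = ?F (E n) x + dt * ?F dE x"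
      unfolding E_Suc comp_add_scaleR[OF Pc_linear] by (rule fip_add_scaleR_left)
    finally show ?thesis .
  qed
  have integrable: "set_integrable lborel U (?F V)" for V
    by (rule set_integrable_fip_lb_vs[OF U]) (simp_all add: Pc_bm Pg_bm)
  have "intU U (fip (Pc \<circ> E (Suc n)) (lb_vs br (Pc \<circ> A (Suc n)) (Pg \<circ> q)))
      = intU U (?F (E n)) + dt * intU U (?F dE)"
    unfolding intU_def pointwise
    using integrable by (simp add: set_integral_add(2))
  moreover have "tip ipc (E (Suc n)) (Gh \<circ> q) = tip ipc (E n) (Gh \<circ> q) + dt * tip ipc dE (Gh \<circ> q)"
    unfolding E_Suc by (rule tip_add_scaleR_left[OF ipc])
  ultimately have "constraintC br U Gh Pg Pc ipc A E (Suc n) q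
      = constraintC br U Gh Pg Pc ipc A E n q
        + dt * (tip ipc dE (Gh \<circ> q) + intU U (?F dE))"
    unfolding constraintC_def by (simp add: algebra_simps)
  then show ?thesis using gauss by simp
qed

theorem mainTheorem1:
  fixes br :: "'g::euclidean_space \<Rightarrow> 'g \<Rightarrow> 'g"
    and U :: "pt set"
    and Gh :: "'xg::real_vector \<Rightarrow> 'xc::real_vector" and Ch :: "'xc \<Rightarrow> 'xd::real_vector"
    and Pg :: "'xg \<Rightarrow> pt \<Rightarrow> real" and Pc Cpw :: "'xc \<Rightarrow> pt \<Rightarrow> real^3"
    and ipc :: "'xc \<Rightarrow> 'xc \<Rightarrow> real" and ipd :: "'xd \<Rightarrow> 'xd \<Rightarrow> real"
    and bh :: "'xc \<Rightarrow> 'xc \<Rightarrow> 'xd"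
    and NL :: "('g \<Rightarrow> 'xc) \<Rightarrow> ('g \<Rightarrow> 'xc) \<Rightarrow> ('g \<Rightarrow> 'xc) \<Rightarrow> real"
    and t :: "nat \<Rightarrow> real" and N :: nat
    and A E :: "nat \<Rightarrow> 'g \<Rightarrow> 'xc" and lam :: "nat \<Rightarrow> 'g \<Rightarrow> 'xg"
  assumes "lie_algebra br" and "ad_invariant br"
    and "ddr_data U Gh Ch Pg Pc Cpw ipc ipd bh"
    and "NL = NL1 br Ch ipd bh \<or> NL = NL2 br U Pc Cpw"
    and "t 0 = 0" and "\<forall>n<N. t n < t (Suc n)"
    and "\<forall>n\<le>N. A n \<in> tensor \<and> E n \<in> tensor \<and> lam n \<in> tensor"
    and "\<forall>n<N. scheme_step br U Gh Ch Pg Pc ipc ipd NL t A E lam n"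
  shows "\<forall>q\<in>tensor. \<forall>n\<le>N. constraintC br U Gh Pg Pc ipc A E n q = constraintC br U Gh Pg Pc ipc A E 0 q"
proof (intro ballI allI impI)
  fix q :: "'g \<Rightarrow> 'xg" and n :: nat
  assume "q \<in> tensor" "n \<le> N"
  then show "constraintC br U Gh Pg Pc ipc A E n q = constraintC br U Gh Pg Pc ipc A E 0 q"
  proof (induction n)
    case (Suc n)
    then have "n < N" by simp
    then have scheme_n: "t n < t (Suc n)" "scheme_step br U Gh Ch Pg Pc ipc ipd NL t A E lam n"
      using assms(6,8) by auto
    show ?case
      using constraintC_Suc[OF assms(1-3) scheme_n Suc.prems(1)] Suc.IH Suc.prems by simp
  qed simp
qed

end
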